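(* Let $A$ be an arbitrary Cayley--Dickson algebra over a field $F$, let $f(x)\in A[x]$ and $\lambda\in A\setminus F$. Then $\lambda$ is a spherical root of $f(x)$ if and only if $f(x)=g(x)\,p_\lambda(x)$ for some $g(x)\in A[x]$.
   Context: For an $F$-algebra $B$ with involution and $\gamma\in F^\times$, the Cayley--Dickson double $B\{\gamma\}$ is $B\times B$ with componentwise linear operations, product $(a,b)(c,d)=(ac+\gamma\bar d b,\ da+b\bar c)$ and involution $\overline{(a,b)}=(\bar a,-b)$. Cayley--Dickson algebras over $F$: $A_1=F[\ell_1:\ell_1^2=\ell_1+\mu]$ with $\mu\in F$, $4\mu+1\neq0$, involution $\overline{\alpha+\beta\ell_1}=(\alpha+\beta)-\beta\ell_1$, and $A_{k+1}=A_k\{\gamma_k\}$, $\gamma_k\in F^\times$; $F$ is identified with $F\cdot1$. These algebras are power-associative. Trace $\mathrm{tr}(\lambda)=\lambda+\bar\lambda\in F$, norm $\mathrm{n}(\lambda)=\bar\lambda\lambda\in F$, characteristic polynomial $p_\lambda(x)=x^2-\mathrm{tr}(\lambda)x+\mathrm{n}(\lambda)\in F[x]$. The polynomial ring $A[x]=A\otimes_F F[x]$ has central indeterminate $x$; every $f\in A[x]$ is written $f(x)=a_mx^m+\dots+a_1x+a_0$ with $a_k\in A$, products are computed by $(ax^i)(bx^j)=(ab)x^{i+j}$ extended bilinearly, and substitution is $f(r)=\sum_k a_k(r^k)$ for $r\in A$. A root $\lambda\in A\setminus F$ of $f$ is a spherical root if every $r\in A$ with $p_\lambda(r)=0$ is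 also a root of $f$. *)

theory Defs
  imports Main
begin

text \<open>
An element of A_n (n >= 1, dim 2^n) is a coordinate function x :: nat => F
with x i = 0 for i >= 2^n.  Level 1: x = x 0 + x 1 * l1.  Level k+1: the pair
(a,b) of A_k x A_k is encoded by coordinates [a on 0..<2^k, b on 2^k..<2^(k+1)].
Parameters: mu (for A_1) and gam k (the gamma_k used in A_(k+1) = A_k{gamma_k}).
\<close>

type_synonym 'a cd = "nat \<Rightarrow> 'a"

definition cd_carrier :: "nat \<Rightarrow> 'a::zero cd set" where
  "cd_carrier n = {x. \<forall>i. 2 ^ n \<le> i \<longrightarrow> x i = 0}"

definition cd_lo :: "nat \<Rightarrow> 'a::zero cd \<Rightarrow> 'a cd" where
  "cd_lo k x = (\<lambda>i. if i < 2 ^ k then x i else 0)"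

definition cd_hi :: "nat \<Rightarrow> 'a::zero cd \<Rightarrow> 'a cd" where
  "cd_hi k x = (\<lambda>i. if i < 2 ^ k then x (i + 2 ^ k) else 0)"

definition cd_join :: "nat \<Rightarrow> 'a::zero cd \<Rightarrow> 'a cd \<Rightarrow> 'a cd" where
  "cd_join k a b = (\<lambda>i. if i < 2 ^ k then a i
                         else if i < 2 ^ Suc k then b (i - 2 ^ k) else 0)"

definition cd_add :: "'a::ab_group_add cd \<Rightarrow> 'a cd \<Rightarrow> 'a cd" where
  "cd_add x y = (\<lambda>i. x i + y i)"

definition cd_neg :: "'a::ab_group_add cd \<Rightarrow> 'a cd" where
  "cd_neg x = (\<lambda>i. - x i)"

definition cd_smult :: "'a::field \<Rightarrow> 'a cd \<Rightarrow> 'a cd" where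
  "cd_smult c x = (\<lambda>i. c * x i)"

definition cd_const :: "'a::zero \<Rightarrow> 'a cd" where
  "cd_const c = (\<lambda>i. if i = 0 then c else 0)"

text \<open>Involution: on A_1, alpha + beta l1 |-> (alpha+beta) - beta l1;
  on A_(k+1), (a,b) |-> (conj a, -b).\<close>
fun cd_conj :: "nat \<Rightarrow> 'a::field cd \<Rightarrow> 'a cd" where
  "cd_conj 0 x = x"
| "cd_conj (Suc 0) x = (\<lambda>i. if i = 0 then x 0 + x 1 else if i = 1 then - x 1 else 0)"
| "cd_conj (Suc (Suc k)) x =
     cd_join (Suc k) (cd_conj (Suc k) (cd_lo (Suc k) x)) (cd_neg (cd_hi (Suc k) x))"

text \<open>Multiplication: on A_1, l1^2 = l1 + mu; on A_(k+1) = A_k{gamma_k},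
  (a,b)(c,d) = (ac + gamma_k (conj d) b, da + b (conj c)).\<close>
fun cd_mult :: "'a::field \<Rightarrow> (nat \<Rightarrow> 'a) \<Rightarrow> nat \<Rightarrow> 'a cd \<Rightarrow> 'a cd \<Rightarrow> 'a cd" where
  "cd_mult mu gam 0 x y = (\<lambda>i. 0)"
| "cd_mult mu gam (Suc 0) x y =
     (\<lambda>i. if i = 0 then x 0 * y 0 + mu * (x 1 * y 1)
          else if i = 1 then x 0 * y 1 + x 1 * y 0 + x 1 * y 1 else 0)"
| "cd_mult mu gam (Suc (Suc k)) x y =
     (let a = cd_lo (Suc k) x; b = cd_hi (Suc k) x;
          c = cd_lo (Suc k) y; d = cd_hi (Suc k) y;
          M = cd_mult mu gam (Suc k); C = cd_conj (Suc k)
      in cd_join (Suc k)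
           (cd_add (M a c) (cd_smult (gam (Suc k)) (M (C d) b)))
           (cd_add (M d a) (M b (C c))))"

text \<open>Trace and norm, as elements of F (their coordinate 0; they lie in F = F*1).\<close>
definition cd_tr :: "nat \<Rightarrow> 'a::field cd \<Rightarrow> 'a" where
  "cd_tr n x = cd_add x (cd_conj n x) 0"

definition cd_norm :: "'a::field \<Rightarrow> (nat \<Rightarrow> 'a) \<Rightarrow> nat \<Rightarrow> 'a cd \<Rightarrow> 'a" where
  "cd_norm mu gam n x = cd_mult mu gam n (cd_conj n x) x 0"

fun cd_pow :: "'a::field \<Rightarrow> (nat \<Rightarrow> 'a) \<Rightarrow> nat \<Rightarrow> 'a cd \<Rightarrow> nat \<Rightarrow> 'a cd" where
  "cd_pow mu gam n r 0 = cd_const 1"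
| "cd_pow mu gam n r (Suc k) = cd_mult mu gam n r (cd_pow mu gam n r k)"

text \<open>Polynomials in A[x] (central indeterminate): coefficient sequences
  f :: nat => A with finite support and all coefficients in A.\<close>
definition cd_is_poly :: "nat \<Rightarrow> (nat \<Rightarrow> 'a::zero cd) \<Rightarrow> bool" where
  "cd_is_poly n f \<longleftrightarrow> finite {k. f k \<noteq> (\<lambda>i. 0)} \<and> (\<forall>k. f k \<in> cd_carrier n)"

definition cd_pmult :: "'a::field \<Rightarrow> (nat \<Rightarrow> 'a) \<Rightarrow> nat \<Rightarrow>
    (nat \<Rightarrow> 'a cd) \<Rightarrow> (nat \<Rightarrow> 'a cd) \<Rightarrow> (nat \<Rightarrow> 'a cd)" where
  "cd_pmult mu gam n f g = (\<lambda>k. (\<lambda>i. \<Sum>j\<le>k. cd_mult mu gam n (f j) (g (k - j)) i))"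

definition cd_eval :: "'a::field \<Rightarrow> (nat \<Rightarrow> 'a) \<Rightarrow> nat \<Rightarrow>
    (nat \<Rightarrow> 'a cd) \<Rightarrow> 'a cd \<Rightarrow> 'a cd" where
  "cd_eval mu gam n f r =
     (\<lambda>i. \<Sum>k\<in>{k. f k \<noteq> (\<lambda>i. 0)}. cd_mult mu gam n (f k) (cd_pow mu gam n r k) i)"

definition cd_charpoly :: "'a::field \<Rightarrow> (nat \<Rightarrow> 'a) \<Rightarrow> nat \<Rightarrow> 'a cd \<Rightarrow> (nat \<Rightarrow> 'a cd)" where
  "cd_charpoly mu gam n l =
     (\<lambda>k. if k = 0 then cd_const (cd_norm mu gam n l)
          else if k = 1 then cd_const (- cd_tr n l)
          else if k = 2 then cd_const 1 else (\<lambda>i. 0))"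

definition cd_spherical_root :: "'a::field \<Rightarrow> (nat \<Rightarrow> 'a) \<Rightarrow> nat \<Rightarrow>
    (nat \<Rightarrow> 'a cd) \<Rightarrow> 'a cd \<Rightarrow> bool" where
  "cd_spherical_root mu gam n f l \<longleftrightarrow>
     l \<in> cd_carrier n \<and> l \<notin> range cd_const \<and> cd_eval mu gam n f l = (\<lambda>i. 0) \<and>
     (\<forall>r\<in>cd_carrier n. cd_eval mu gam n (cd_charpoly mu gam n l) r = (\<lambda>i. 0)
        \<longrightarrow> cd_eval mu gam n f r = (\<lambda>i. 0))"

end

theory Submission
  imports Defs "HOL-Computational_Algebra.Polynomial"
begin

(*
  Reduce x^m modulo p(x) = x^2 - tr(l) x + n(l) to u_m + v_m x and put U = sum u_m f_m,
  V = sum v_m f_m.  Since p has scalar coefficients, f = g p in A[x] iff p divides every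
  coordinate polynomial of f over F, i.e. iff U = V = 0.  Every r with the trace and norm of l
  satisfies r^2 = tr(l) r - n(l), hence f(r) = U + V r.  So everything rests on a rigidity
  property of the sphere of a non-scalar l: if V r = V l for all r with the trace and norm of l,
  then V = 0.  It is proved by induction along the doubling A_(k+1) = A_k{gamma_k}: writing
  l = (c, d), one moves c or d inside its own sphere, and if both are scalars one uses explicit
  elements of A_1.  At the bottom, l and its conjugate differ by an element of A_1 of norm
  -(4 mu + 1) l_1^2 /= 0, and elements of A_1 of nonzero norm are not zero divisors in any A_k.
*)

section \<open>Linearity and the doubling formulas\<close>

lemma cd_level_induct [case_names zero one double]:
  assumes "P 0" "P (Suc 0)" "\<And>k. P (Suc k) \<Longrightarrow> P (Suc (Suc k))"
  shows "P n"
proof -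
  have "P n \<and> P (Suc n)" by (induct n) (auto intro: assms)
  then show ?thesis by simp
qed

lemma cd_lo_carrier [simp]: "cd_lo k x \<in> cd_carrier k"
  by (simp add: cd_carrier_def cd_lo_def)

lemma cd_hi_carrier [simp]: "cd_hi k x \<in> cd_carrier k"
  by (simp add: cd_carrier_def cd_hi_def)

lemma cd_join_carrier [simp]: "cd_join k a b \<in> cd_carrier (Suc k)"
  by (simp add: cd_carrier_def cd_join_def)

lemma cd_lo_join [simp]: "a \<in> cd_carrier k \<Longrightarrow> cd_lo k (cd_join k a b) = a"
  by (auto simp: cd_lo_def cd_join_def cd_carrier_def fun_eq_iff)

lemma cd_hi_join [simp]: "b \<in> cd_carrier k \<Longrightarrow> cd_hi k (cd_join k a b) = b"
  by (auto simp: cd_hi_def cd_join_def cd_carrier_def fun_eq_iff)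

lemma cd_join_lo_hi: "x \<in> cd_carrier (Suc k) \<Longrightarrow> cd_join k (cd_lo k x) (cd_hi k x) = x"
  by (auto simp: cd_hi_def cd_lo_def cd_join_def cd_carrier_def fun_eq_iff)

lemma cd_carrier_SucE:
  assumes "x \<in> cd_carrier (Suc k)"
  obtains a b where "x = cd_join k a b" "a \<in> cd_carrier k" "b \<in> cd_carrier k"
  using assms cd_join_lo_hi cd_lo_carrier cd_hi_carrier by metis

lemma cd_join_eq_iff:
  assumes "a \<in> cd_carrier k" "b \<in> cd_carrier k" "c \<in> cd_carrier k" "d \<in> cd_carrier k"
  shows "cd_join k a b = cd_join k c d \<longleftrightarrow> a = c \<and> b = d"
  by (metis assms cd_lo_join cd_hi_join)

lemma cd_join_zero: "x \<in> cd_carrier k \<Longrightarrow> cd_join k x (\<lambda>i. 0) = x"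
  by (auto simp: cd_join_def cd_carrier_def fun_eq_iff)

lemma cd_join_zero_zero: "cd_join k (\<lambda>i. 0) (\<lambda>i. 0) = (\<lambda>i. 0)"
  by (auto simp: cd_join_def fun_eq_iff)

lemma cd_join_lincomb:
  "cd_join k (\<lambda>i. (s::'a::field) * a i + t * c i) (\<lambda>i. s * b i + t * d i) =
   (\<lambda>i. s * cd_join k a b i + t * cd_join k c d i)"
  by (auto simp: cd_join_def fun_eq_iff)

lemma cd_join_smult:
  "cd_join k (\<lambda>i. (s::'a::field) * a i) (\<lambda>i. s * b i) = (\<lambda>i. s * cd_join k a b i)"
  by (auto simp: cd_join_def fun_eq_iff)

lemma cd_lo_lincomb:
  "cd_lo k (\<lambda>i. (s::'a::field) * a i + t * c i) = (\<lambda>i. s * cd_lo k a i + t * cd_lo k c i)"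
  by (auto simp: cd_lo_def fun_eq_iff)

lemma cd_hi_lincomb:
  "cd_hi k (\<lambda>i. (s::'a::field) * a i + t * c i) = (\<lambda>i. s * cd_hi k a i + t * cd_hi k c i)"
  by (auto simp: cd_hi_def fun_eq_iff)

lemma cd_carrier_Suc0_le: "x \<in> cd_carrier (Suc 0) \<Longrightarrow> x \<in> cd_carrier (Suc k)"
proof -
  assume x: "x \<in> cd_carrier (Suc 0)"
  have "(2::nat) ^ Suc 0 \<le> 2 ^ Suc k" by (simp add: power_increasing)
  then show ?thesis using x order_trans unfolding cd_carrier_def by blast
qed

lemma cd_const_carrier [simp]: "cd_const s \<in> cd_carrier k"
  by (auto simp: cd_carrier_def cd_const_def)

lemma cd_zero_carrier [simp]: "(\<lambda>i. 0) \<in> cd_carrier k"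
  by (auto simp: cd_carrier_def)

lemma cd_carrier_add [simp]:
  "x \<in> cd_carrier k \<Longrightarrow> y \<in> cd_carrier k \<Longrightarrow> (\<lambda>i. (x i::'a::field) + y i) \<in> cd_carrier k"
  by (auto simp: cd_carrier_def)

lemma cd_carrier_smult [simp]:
  "x \<in> cd_carrier k \<Longrightarrow> (\<lambda>i. (s::'a::field) * x i) \<in> cd_carrier k"
  by (auto simp: cd_carrier_def)

lemma cd_carrier_diff [simp]:
  "x \<in> cd_carrier k \<Longrightarrow> y \<in> cd_carrier k \<Longrightarrow> (\<lambda>i. (x i::'a::field) - y i) \<in> cd_carrier k"
  by (auto simp: cd_carrier_def)

lemma cd_carrier_neg [simp]:
  "x \<in> cd_carrier k \<Longrightarrow> (\<lambda>i. - (x i::'a::field)) \<in> cd_carrier k"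
  by (auto simp: cd_carrier_def)

lemma cd_conj_carrier [simp]: "cd_conj (Suc k) (x::'a::field cd) \<in> cd_carrier (Suc k)"
  by (cases k) (simp_all only: cd_conj.simps cd_join_carrier, auto simp: cd_carrier_def)

lemma cd_mult_carrier [simp]: "cd_mult mu gam (Suc k) x y \<in> cd_carrier (Suc k)"
  by (cases k) (simp_all only: cd_mult.simps Let_def cd_join_carrier, auto simp: cd_carrier_def)

lemma cd_conj_lincomb:
  "cd_conj n (\<lambda>i. (s::'a::field) * x i + t * y i) = (\<lambda>i. s * cd_conj n x i + t * cd_conj n y i)"
proof (induction n arbitrary: x y rule: cd_level_induct)
  case double
  then show ?case by (simp add: cd_lo_lincomb cd_hi_lincomb cd_neg_def cd_join_lincomb[symmetric])
qed (auto simp: fun_eq_iff algebra_simps)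

lemma cd_mult_lincomb:
  "cd_mult mu gam n (\<lambda>i. (s::'a::field) * x i + t * y i) z =
     (\<lambda>i. s * cd_mult mu gam n x z i + t * cd_mult mu gam n y z i) \<and>
   cd_mult mu gam n z (\<lambda>i. s * x i + t * y i) =
     (\<lambda>i. s * cd_mult mu gam n z x i + t * cd_mult mu gam n z y i)"
proof (induction n arbitrary: x y z s t rule: cd_level_induct)
  case (double k)
  show ?case
    by (simp only: cd_mult.simps Let_def cd_lo_lincomb cd_hi_lincomb cd_conj_lincomb double)
      (auto simp: fun_eq_iff cd_join_def cd_add_def cd_smult_def algebra_simps)
qed (auto simp: fun_eq_iff algebra_simps)

lemma cd_mult_diff_left:
  "cd_mult mu gam n (\<lambda>i. (x i::'a::field) - y i) z = (\<lambda>i. cd_mult mu gam n x z i - cd_mult mu gam n y z i)"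
  using cd_mult_lincomb[of mu gam n 1 x "-1" y z] by simp

lemma cd_mult_diff_right:
  "cd_mult mu gam n z (\<lambda>i. (x i::'a::field) - y i) = (\<lambda>i. cd_mult mu gam n z x i - cd_mult mu gam n z y i)"
  using cd_mult_lincomb[of mu gam n 1 x "-1" y z] by simp

lemma cd_mult_smult_left:
  "cd_mult mu gam n (\<lambda>i. (s::'a::field) * x i) z = (\<lambda>i. s * cd_mult mu gam n x z i)"
  using cd_mult_lincomb[of mu gam n s x 0 x z] by simp

lemma cd_mult_smult_right:
  "cd_mult mu gam n z (\<lambda>i. (s::'a::field) * x i) = (\<lambda>i. s * cd_mult mu gam n z x i)"
  using cd_mult_lincomb[of mu gam n s x 0 x z] by simp

lemma cd_mult_neg_left:
  "cd_mult mu gam n (\<lambda>i. - (x i::'a::field)) z = (\<lambda>i. - cd_mult mu gam n x z i)"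
  using cd_mult_smult_left[of mu gam n "-1" x z] by simp

lemma cd_mult_neg_right:
  "cd_mult mu gam n z (\<lambda>i. - (x i::'a::field)) = (\<lambda>i. - cd_mult mu gam n z x i)"
  using cd_mult_smult_right[of mu gam n z "-1" x] by simp

lemma cd_mult_zero_left [simp]: "cd_mult mu gam n (\<lambda>i. 0::'a::field) z = (\<lambda>i. 0)"
  using cd_mult_smult_left[of mu gam n 0 z z] by simp

lemma cd_mult_zero_right [simp]: "cd_mult mu gam n z (\<lambda>i. 0::'a::field) = (\<lambda>i. 0)"
  using cd_mult_smult_right[of mu gam n z 0 z] by simp

lemma cd_conj_add: "cd_conj n (\<lambda>i. (x i::'a::field) + y i) = (\<lambda>i. cd_conj n x i + cd_conj n y i)"
  using cd_conj_lincomb[of n 1 x 1 y] by simp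

lemma cd_conj_smult: "cd_conj n (\<lambda>i. (s::'a::field) * x i) = (\<lambda>i. s * cd_conj n x i)"
  using cd_conj_lincomb[of n s x 0 x] by simp

lemma cd_conj_neg: "cd_conj n (\<lambda>i. - (x i::'a::field)) = (\<lambda>i. - cd_conj n x i)"
  using cd_conj_lincomb[of n "-1" x 0 x] by simp

lemma cd_conj_diff: "cd_conj n (\<lambda>i. (x i::'a::field) - y i) = (\<lambda>i. cd_conj n x i - cd_conj n y i)"
  using cd_conj_lincomb[of n 1 x "-1" y] by simp

lemma cd_conj_zero [simp]: "cd_conj n (\<lambda>i. 0::'a::field) = (\<lambda>i. 0)"
  using cd_conj_lincomb[of n 0 "\<lambda>i. 0" 0 "\<lambda>i. 0"] by simp

lemma cd_mult_join:
  assumes "a \<in> cd_carrier (Suc k)" "b \<in> cd_carrier (Suc k)" "c \<in> cd_carrier (Suc k)" "d \<in> cd_carrier (Suc k)"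
  shows "cd_mult mu gam (Suc (Suc k)) (cd_join (Suc k) a b) (cd_join (Suc k) c d) = cd_join (Suc k)
     (\<lambda>i. cd_mult mu gam (Suc k) a c i + gam (Suc k) * cd_mult mu gam (Suc k) (cd_conj (Suc k) d) b i)
     (\<lambda>i. cd_mult mu gam (Suc k) d a i + cd_mult mu gam (Suc k) b (cd_conj (Suc k) c) i)"
  using assms by (simp add: Let_def cd_add_def cd_smult_def)

lemma cd_conj_join:
  "a \<in> cd_carrier (Suc k) \<Longrightarrow> b \<in> cd_carrier (Suc k) \<Longrightarrow>
   cd_conj (Suc (Suc k)) (cd_join (Suc k) a b) = cd_join (Suc k) (cd_conj (Suc k) a) (\<lambda>i. - (b i::'a::field))"
  by (simp add: cd_neg_def)

declare cd_mult.simps(3) [simp del] cd_conj.simps(3) [simp del]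

lemma cd_const_zero: "cd_const 0 = (\<lambda>i. 0)"
  by (simp add: cd_const_def fun_eq_iff)

lemma cd_join_const: "cd_join (Suc k) (cd_const s) (\<lambda>i. 0) = cd_const s"
  by (auto simp: cd_join_def cd_const_def fun_eq_iff)

lemma cd_conj_const: "cd_conj (Suc k) (cd_const (s::'a::field)) = cd_const s"
proof (induction k)
  case (Suc k)
  then show ?case using cd_conj_join[of "cd_const s" k "\<lambda>i. 0"] by (simp add: cd_join_const)
qed (auto simp: cd_const_def fun_eq_iff)

lemma cd_mult_const:
  "y \<in> cd_carrier (Suc k) \<Longrightarrow>
   cd_mult mu gam (Suc k) (cd_const s) y = (\<lambda>i. (s::'a::field) * y i) \<and>
   cd_mult mu gam (Suc k) y (cd_const s) = (\<lambda>i. s * y i)"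
proof (induction k arbitrary: y)
  case 0
  then show ?case by (auto simp: cd_const_def fun_eq_iff cd_carrier_def)
next
  case (Suc k)
  obtain a b where y: "y = cd_join (Suc k) a b" and ab: "a \<in> cd_carrier (Suc k)" "b \<in> cd_carrier (Suc k)"
    using Suc.prems by (rule cd_carrier_SucE)
  have s: "cd_const s = cd_join (Suc k) (cd_const s) (\<lambda>i. 0)"
    by (rule cd_join_const[symmetric])
  show ?case
    by (subst (1 2) s, unfold y)
      (simp add: cd_mult_join ab Suc.IH cd_conj_const, auto simp: cd_join_def fun_eq_iff)
qed

section \<open>Conjugation, trace and norm\<close>

lemma cd_conj_conj:
  "x \<in> cd_carrier (Suc k) \<Longrightarrow> cd_conj (Suc k) (cd_conj (Suc k) (x::'a::field cd)) = x"
proof (induction k arbitrary: x)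
  case 0
  then show ?case by (auto simp: fun_eq_iff cd_carrier_def)
next
  case (Suc k)
  obtain a b where x: "x = cd_join (Suc k) a b" and ab: "a \<in> cd_carrier (Suc k)" "b \<in> cd_carrier (Suc k)"
    using Suc.prems by (rule cd_carrier_SucE)
  show ?case unfolding x by (simp add: cd_conj_join ab Suc.IH)
qed

lemma cd_conj_mult:
  "x \<in> cd_carrier (Suc k) \<Longrightarrow> y \<in> cd_carrier (Suc k) \<Longrightarrow>
   cd_conj (Suc k) (cd_mult mu gam (Suc k) x y) =
   cd_mult mu gam (Suc k) (cd_conj (Suc k) y) (cd_conj (Suc k) (x::'a::field cd))"
proof (induction k arbitrary: x y)
  case 0
  then show ?case by (auto simp: fun_eq_iff cd_carrier_def algebra_simps)
next
  case (Suc k)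
  obtain a b where x: "x = cd_join (Suc k) a b" and ab: "a \<in> cd_carrier (Suc k)" "b \<in> cd_carrier (Suc k)"
    using Suc.prems(1) by (rule cd_carrier_SucE)
  obtain c d where y: "y = cd_join (Suc k) c d" and cd: "c \<in> cd_carrier (Suc k)" "d \<in> cd_carrier (Suc k)"
    using Suc.prems(2) by (rule cd_carrier_SucE)
  show ?case
    unfolding x y
    by (simp add: cd_mult_join cd_conj_join ab cd Suc.IH cd_conj_add cd_conj_smult cd_conj_neg cd_mult_neg_left
        cd_mult_neg_right cd_conj_conj cd_mult_smult_left cd_mult_smult_right)
      (auto simp: cd_join_def fun_eq_iff)
qed


lemma cd_tr_join:
  "a \<in> cd_carrier (Suc k) \<Longrightarrow> b \<in> cd_carrier (Suc k) \<Longrightarrow>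
   cd_tr (Suc (Suc k)) (cd_join (Suc k) a (b::'a::field cd)) = cd_tr (Suc k) a"
  by (simp add: cd_tr_def cd_add_def cd_conj_join) (simp add: cd_join_def)

lemma cd_norm_join:
  "a \<in> cd_carrier (Suc k) \<Longrightarrow> b \<in> cd_carrier (Suc k) \<Longrightarrow>
   cd_norm mu gam (Suc (Suc k)) (cd_join (Suc k) a (b::'a::field cd)) =
   cd_norm mu gam (Suc k) a - gam (Suc k) * cd_norm mu gam (Suc k) b"
  by (simp add: cd_norm_def cd_conj_join cd_mult_join cd_mult_neg_right) (simp add: cd_join_def)

lemma cd_add_conj:
  "x \<in> cd_carrier (Suc k) \<Longrightarrow> (\<lambda>i. x i + cd_conj (Suc k) (x::'a::field cd) i) = cd_const (cd_tr (Suc k) x)"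
proof (induction k arbitrary: x)
  case 0
  then show ?case by (auto simp: fun_eq_iff cd_carrier_def cd_tr_def cd_add_def cd_const_def)
next
  case (Suc k)
  obtain a b where x: "x = cd_join (Suc k) a b" and ab: "a \<in> cd_carrier (Suc k)" "b \<in> cd_carrier (Suc k)"
    using Suc.prems by (rule cd_carrier_SucE)
  have "(\<lambda>i. x i + cd_conj (Suc (Suc k)) x i) = cd_join (Suc k) (\<lambda>i. a i + cd_conj (Suc k) a i) (\<lambda>i. 0)"
    unfolding x by (simp add: cd_conj_join ab) (auto simp: cd_join_def fun_eq_iff)
  then show ?case by (simp add: Suc.IH ab cd_join_const x cd_tr_join)
qed

lemma cd_conj_mult_self:
  "x \<in> cd_carrier (Suc k) \<Longrightarrow>
   cd_mult mu gam (Suc k) (cd_conj (Suc k) x) x = cd_const (cd_norm mu gam (Suc k) (x::'a::field cd))"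
proof (induction k arbitrary: x)
  case 0
  then show ?case by (auto simp: fun_eq_iff cd_carrier_def cd_const_def cd_norm_def algebra_simps)
next
  case (Suc k)
  obtain a b where x: "x = cd_join (Suc k) a b" and ab: "a \<in> cd_carrier (Suc k)" "b \<in> cd_carrier (Suc k)"
    using Suc.prems by (rule cd_carrier_SucE)
  have "cd_mult mu gam (Suc (Suc k)) (cd_conj (Suc (Suc k)) x) x =
    cd_join (Suc k) (\<lambda>i. cd_const (cd_norm mu gam (Suc k) a) i - gam (Suc k) * cd_const (cd_norm mu gam (Suc k) b) i) (\<lambda>i. 0)"
    unfolding x by (simp add: cd_conj_join cd_mult_join ab cd_mult_neg_left cd_mult_neg_right Suc.IH)
  also have "\<dots> = cd_const (cd_norm mu gam (Suc (Suc k)) x)"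
    unfolding x by (simp add: cd_norm_join ab) (auto simp: cd_join_def cd_const_def fun_eq_iff)
  finally show ?case .
qed

lemma cd_conj_eq_tr_diff:
  assumes "x \<in> cd_carrier (Suc k)"
  shows "cd_conj (Suc k) (x::'a::field cd) = (\<lambda>i. cd_const (cd_tr (Suc k) x) i - x i)"
proof
  fix i
  have "x i + cd_conj (Suc k) x i = cd_const (cd_tr (Suc k) x) i"
    using fun_cong[OF cd_add_conj[OF assms], of i] by simp
  then show "cd_conj (Suc k) x i = cd_const (cd_tr (Suc k) x) i - x i"
    by (simp add: eq_diff_eq add.commute)
qed

lemma cd_mult_self:
  assumes "x \<in> cd_carrier (Suc k)"
  shows "cd_mult mu gam (Suc k) x x =
    (\<lambda>i. cd_tr (Suc k) x * x i - cd_const (cd_norm mu gam (Suc k) (x::'a::field cd)) i)"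
proof -
  have "cd_const (cd_norm mu gam (Suc k) x) = cd_mult mu gam (Suc k) (cd_conj (Suc k) x) x"
    using assms by (rule cd_conj_mult_self[symmetric])
  also have "\<dots> = (\<lambda>i. cd_tr (Suc k) x * x i - cd_mult mu gam (Suc k) x x i)"
    using assms by (simp add: cd_conj_eq_tr_diff cd_mult_diff_left cd_mult_const)
  finally show ?thesis by (auto simp: fun_eq_iff dest: fun_cong)
qed

lemma cd_mult_conj_self:
  assumes "x \<in> cd_carrier (Suc k)"
  shows "cd_mult mu gam (Suc k) x (cd_conj (Suc k) x) = cd_const (cd_norm mu gam (Suc k) (x::'a::field cd))"
  using assms by (simp add: cd_conj_eq_tr_diff cd_mult_diff_right cd_mult_const cd_mult_self)

lemma cd_tr_conj:
  "x \<in> cd_carrier (Suc k) \<Longrightarrow> cd_tr (Suc k) (cd_conj (Suc k) x) = cd_tr (Suc k) (x::'a::field cd)"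
  by (simp add: cd_tr_def cd_add_def cd_conj_conj)

lemma cd_norm_conj:
  "x \<in> cd_carrier (Suc k) \<Longrightarrow>
   cd_norm mu gam (Suc k) (cd_conj (Suc k) x) = cd_norm mu gam (Suc k) (x::'a::field cd)"
  by (simp add: cd_norm_def cd_conj_conj cd_mult_conj_self) (simp add: cd_const_def)

section \<open>The subalgebra \<open>A\<^sub>1\<close>\<close>

definition norm1 :: "'a::field \<Rightarrow> 'a \<Rightarrow> 'a \<Rightarrow> 'a" where
  "norm1 mu u v = u * u + u * v - mu * (v * v)"

lemma cd_conj_Suc0_emb:
  "x \<in> cd_carrier (Suc 0) \<Longrightarrow> cd_conj (Suc k) (x::'a::field cd) = cd_conj (Suc 0) x"
proof (induction k)
  case (Suc k)
  have "x \<in> cd_carrier (Suc k)" "cd_conj (Suc 0) x \<in> cd_carrier (Suc k)"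
    using Suc.prems cd_carrier_Suc0_le cd_conj_carrier by blast+
  then show ?case
    using Suc cd_conj_join[of x k "\<lambda>i. 0"] by (simp add: cd_join_zero)
qed simp

lemma cd_mult_Suc0_emb:
  "x \<in> cd_carrier (Suc 0) \<Longrightarrow> y \<in> cd_carrier (Suc 0) \<Longrightarrow>
   cd_mult mu gam (Suc k) x y = cd_mult mu gam (Suc 0) (x::'a::field cd) y"
proof (induction k)
  case (Suc k)
  have xy: "x \<in> cd_carrier (Suc k)" "y \<in> cd_carrier (Suc k)"
    using Suc.prems cd_carrier_Suc0_le by blast+
  have "cd_mult mu gam (Suc (Suc k)) x y =
      cd_mult mu gam (Suc (Suc k)) (cd_join (Suc k) x (\<lambda>i. 0)) (cd_join (Suc k) y (\<lambda>i. 0))"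
    using xy by (simp only: cd_join_zero)
  also have "\<dots> = cd_join (Suc k) (cd_mult mu gam (Suc k) x y) (\<lambda>i. 0)"
    by (simp add: cd_mult_join xy del: cd_mult.simps(2))
  also have "\<dots> = cd_mult mu gam (Suc 0) x y"
    using Suc cd_carrier_Suc0_le[OF cd_mult_carrier[of mu gam 0 x y], of k]
    by (simp add: cd_join_zero del: cd_mult.simps(2))
  finally show ?case .
qed simp

lemma cd_tr_Suc0_emb: "x \<in> cd_carrier (Suc 0) \<Longrightarrow> cd_tr (Suc k) (x::'a::field cd) = 2 * x 0 + x 1"
  by (simp add: cd_tr_def cd_add_def cd_conj_Suc0_emb[of x k])

lemma cd_norm_Suc0_emb:
  "x \<in> cd_carrier (Suc 0) \<Longrightarrow> cd_norm mu gam (Suc k) (x::'a::field cd) = norm1 mu (x 0) (x 1)"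
  by (simp add: cd_norm_def cd_conj_Suc0_emb[of x k] cd_mult_Suc0_emb[of _ x mu gam k] del: cd_conj.simps)
    (simp add: norm1_def algebra_simps)

declare cd_mult.simps(2) [simp del] cd_conj.simps(2) [simp del]

lemma cd_mult_Suc0_join:
  assumes w: "w \<in> cd_carrier (Suc 0)" and pq: "p \<in> cd_carrier (Suc k)" "q \<in> cd_carrier (Suc k)"
  shows "cd_mult mu gam (Suc (Suc k)) w (cd_join (Suc k) p q) =
    cd_join (Suc k) (cd_mult mu gam (Suc k) w p) (cd_mult mu gam (Suc k) q (w::'a::field cd))"
proof -
  have wk: "w \<in> cd_carrier (Suc k)" using w by (rule cd_carrier_Suc0_le)
  have "cd_mult mu gam (Suc (Suc k)) w (cd_join (Suc k) p q) =
      cd_mult mu gam (Suc (Suc k)) (cd_join (Suc k) w (\<lambda>i. 0)) (cd_join (Suc k) p q)"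
    using wk by (simp only: cd_join_zero)
  also have "\<dots> = cd_join (Suc k) (cd_mult mu gam (Suc k) w p) (cd_mult mu gam (Suc k) q w)"
    using wk pq by (simp add: cd_mult_join)
  finally show ?thesis .
qed

lemma cd_mult_join_Suc0:
  assumes w: "w \<in> cd_carrier (Suc 0)" and pq: "p \<in> cd_carrier (Suc k)" "q \<in> cd_carrier (Suc k)"
  shows "cd_mult mu gam (Suc (Suc k)) (cd_join (Suc k) p q) w =
    cd_join (Suc k) (cd_mult mu gam (Suc k) p w) (cd_mult mu gam (Suc k) q (cd_conj (Suc 0) (w::'a::field cd)))"
proof -
  have wk: "w \<in> cd_carrier (Suc k)" using w by (rule cd_carrier_Suc0_le)
  have "cd_mult mu gam (Suc (Suc k)) (cd_join (Suc k) p q) w =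
      cd_mult mu gam (Suc (Suc k)) (cd_join (Suc k) p q) (cd_join (Suc k) w (\<lambda>i. 0))"
    using wk by (simp only: cd_join_zero)
  also have "\<dots> = cd_join (Suc k) (cd_mult mu gam (Suc k) p w) (cd_mult mu gam (Suc k) q (cd_conj (Suc k) w))"
    using wk pq by (simp add: cd_mult_join)
  finally show ?thesis using w by (simp only: cd_conj_Suc0_emb[of w k])
qed

lemma norm1_conj:
  "norm1 mu (cd_conj (Suc 0) z 0) (cd_conj (Suc 0) z 1) = norm1 mu (z 0) (z 1)"
  by (simp add: norm1_def algebra_simps cd_conj.simps(2))

lemma cd_Suc0_mult_cancel:
  assumes "z \<in> cd_carrier (Suc 0)" "a \<in> cd_carrier (Suc k)"
  shows "cd_mult mu gam (Suc k) (cd_conj (Suc 0) z) (cd_mult mu gam (Suc k) z a) =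
      (\<lambda>i. norm1 mu (z 0) (z 1) * a i) \<and>
    cd_mult mu gam (Suc k) (cd_mult mu gam (Suc k) a z) (cd_conj (Suc 0) z) =
      (\<lambda>i. norm1 mu (z 0) (z 1) * (a::'a::field cd) i)"
  using assms
proof (induction k arbitrary: a z)
  case 0
  have a: "a j = 0" if "j \<ge> 2" for j using 0 that by (simp add: cd_carrier_def)
  show ?case
  proof (intro conjI ext)
    fix i :: nat
    consider "i = 0" | "i = 1" | "i \<ge> 2" by linarith
    then show "cd_mult mu gam (Suc 0) (cd_conj (Suc 0) z) (cd_mult mu gam (Suc 0) z a) i =
        norm1 mu (z 0) (z 1) * a i"
      by cases (simp_all add: a norm1_def algebra_simps cd_mult.simps(2) cd_conj.simps(2))
    consider "i = 0" | "i = 1" | "i \<ge> 2" by linarith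
    then show "cd_mult mu gam (Suc 0) (cd_mult mu gam (Suc 0) a z) (cd_conj (Suc 0) z) i =
        norm1 mu (z 0) (z 1) * a i"
      by cases (simp_all add: a norm1_def algebra_simps cd_mult.simps(2) cd_conj.simps(2))
  qed
next
  case (Suc k)
  obtain a1 a2 where a: "a = cd_join (Suc k) a1 a2" and a12: "a1 \<in> cd_carrier (Suc k)" "a2 \<in> cd_carrier (Suc k)"
    using Suc.prems(2) by (rule cd_carrier_SucE)
  let ?z' = "cd_conj (Suc 0) z"
  have z': "?z' \<in> cd_carrier (Suc 0)" by (rule cd_conj_carrier)
  have z'': "cd_conj (Suc 0) ?z' = z" using Suc.prems(1) by (rule cd_conj_conj)
  have "cd_mult mu gam (Suc (Suc k)) ?z' (cd_mult mu gam (Suc (Suc k)) z a) =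
      cd_join (Suc k) (cd_mult mu gam (Suc k) ?z' (cd_mult mu gam (Suc k) z a1))
        (cd_mult mu gam (Suc k) (cd_mult mu gam (Suc k) a2 z) ?z')"
    unfolding a using Suc.prems(1) z' a12 by (simp add: cd_mult_Suc0_join)
  moreover have "cd_mult mu gam (Suc (Suc k)) (cd_mult mu gam (Suc (Suc k)) a z) ?z' =
      cd_join (Suc k) (cd_mult mu gam (Suc k) (cd_mult mu gam (Suc k) a1 z) ?z')
        (cd_mult mu gam (Suc k) (cd_mult mu gam (Suc k) a2 ?z') (cd_conj (Suc 0) ?z'))"
    unfolding a using Suc.prems(1) z' a12 by (simp add: cd_mult_join_Suc0)
  ultimately show ?case
    unfolding a using Suc.IH[OF Suc.prems(1)] Suc.IH[OF z'] a12
    by (simp add: z'' norm1_conj[simplified] cd_join_smult)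
qed

lemma cd_Suc0_mult_eq_zero:
  assumes z: "z \<in> cd_carrier (Suc 0)" "norm1 mu (z 0) (z 1) \<noteq> 0" and a: "a \<in> cd_carrier (Suc k)"
  shows "cd_mult mu gam (Suc k) z a = (\<lambda>i. 0) \<Longrightarrow> a = (\<lambda>i. 0::'a::field)"
    and "cd_mult mu gam (Suc k) a z = (\<lambda>i. 0) \<Longrightarrow> a = (\<lambda>i. 0)"
proof -
  note cancel = cd_Suc0_mult_cancel[OF z(1) a, of mu gam]
  show "a = (\<lambda>i. 0)" if "cd_mult mu gam (Suc k) z a = (\<lambda>i. 0)"
    using cancel that z(2) by (auto simp: fun_eq_iff)
  show "a = (\<lambda>i. 0)" if "cd_mult mu gam (Suc k) a z = (\<lambda>i. 0)"
    using cancel that z(2) by (auto simp: fun_eq_iff)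
qed

section \<open>Rigidity of spheres\<close>

lemma cd_in_range_const_iff: "x \<in> range cd_const \<longleftrightarrow> (\<forall>i. i \<noteq> 0 \<longrightarrow> x i = 0)"
proof
  assume "\<forall>i. i \<noteq> 0 \<longrightarrow> x i = 0"
  then have "x = cd_const (x 0)" by (auto simp: cd_const_def fun_eq_iff)
  then show "x \<in> range cd_const" by blast
qed (auto simp: cd_const_def)

lemma cd_conj_in_range_const_iff:
  "x \<in> cd_carrier (Suc k) \<Longrightarrow> cd_conj (Suc k) (x::'a::field cd) \<in> range cd_const \<longleftrightarrow> x \<in> range cd_const"
  by (metis cd_conj_conj cd_conj_const image_iff)

text \<open>The elements with the trace and norm of \<open>l\<close>. They are roots of the characteristic polynomial
  of \<open>l\<close> (\<open>cd_mult_self\<close>); only these roots are needed.\<close>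

definition cd_sphere :: "'a::field \<Rightarrow> (nat \<Rightarrow> 'a) \<Rightarrow> nat \<Rightarrow> 'a cd \<Rightarrow> 'a cd set" where
  "cd_sphere mu gam n l =
     {r \<in> cd_carrier n. cd_tr n r = cd_tr n l \<and> cd_norm mu gam n r = cd_norm mu gam n l}"

lemma cd_sphere_carrier: "r \<in> cd_sphere mu gam n l \<Longrightarrow> r \<in> cd_carrier n"
  by (simp add: cd_sphere_def)

lemma cd_conj_in_sphere:
  "l \<in> cd_carrier (Suc k) \<Longrightarrow> r \<in> cd_sphere mu gam (Suc k) l \<Longrightarrow>
   cd_conj (Suc k) r \<in> cd_sphere mu gam (Suc k) (cd_conj (Suc k) (l::'a::field cd))"
  by (simp add: cd_sphere_def cd_tr_conj cd_norm_conj)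

lemma cd_join_in_sphere_lo:
  "x \<in> cd_sphere mu gam (Suc k) c \<Longrightarrow> c \<in> cd_carrier (Suc k) \<Longrightarrow> d \<in> cd_carrier (Suc k) \<Longrightarrow>
   cd_join (Suc k) x d \<in> cd_sphere mu gam (Suc (Suc k)) (cd_join (Suc k) c (d::'a::field cd))"
  by (simp add: cd_sphere_def cd_tr_join cd_norm_join)

lemma cd_join_in_sphere_hi:
  "y \<in> cd_sphere mu gam (Suc k) d \<Longrightarrow> c \<in> cd_carrier (Suc k) \<Longrightarrow> d \<in> cd_carrier (Suc k) \<Longrightarrow>
   cd_join (Suc k) c y \<in> cd_sphere mu gam (Suc (Suc k)) (cd_join (Suc k) c (d::'a::field cd))"
  by (simp add: cd_sphere_def cd_tr_join cd_norm_join)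

definition cd_sphere_rigid :: "'a::field \<Rightarrow> (nat \<Rightarrow> 'a) \<Rightarrow> nat \<Rightarrow> bool" where
  "cd_sphere_rigid mu gam n \<longleftrightarrow>
     (\<forall>l \<in> cd_carrier n - range cd_const. \<forall>a \<in> cd_carrier n.
        (\<forall>r \<in> cd_sphere mu gam n l. cd_mult mu gam n a r = cd_mult mu gam n a l) \<longrightarrow> a = (\<lambda>i. 0))"

lemma cd_sphere_rigidD:
  "cd_sphere_rigid mu gam n \<Longrightarrow> l \<in> cd_carrier n \<Longrightarrow> l \<notin> range cd_const \<Longrightarrow> a \<in> cd_carrier n \<Longrightarrow>
   (\<And>r. r \<in> cd_sphere mu gam n l \<Longrightarrow> cd_mult mu gam n a r = cd_mult mu gam n a l) \<Longrightarrow> a = (\<lambda>i. 0)"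
  unfolding cd_sphere_rigid_def by blast

text \<open>The conjugation is an anti-automorphism, so rigidity for left factors gives it for right factors.\<close>

lemma cd_sphere_rigidD_right:
  fixes l a :: "'a::field cd"
  assumes rigid: "cd_sphere_rigid mu gam (Suc k)" and l: "l \<in> cd_carrier (Suc k)" "l \<notin> range cd_const"
    and a: "a \<in> cd_carrier (Suc k)"
    and eq: "\<And>r. r \<in> cd_sphere mu gam (Suc k) l \<Longrightarrow> cd_mult mu gam (Suc k) r a = cd_mult mu gam (Suc k) l a"
  shows "a = (\<lambda>i. 0)"
proof -
  let ?C = "cd_conj (Suc k)"
  have "?C a = (\<lambda>i. 0)"
  proof (rule cd_sphere_rigidD[OF rigid])
    show "?C l \<notin> range cd_const" using l by (simp add: cd_conj_in_range_const_iff)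
    fix r assume r: "r \<in> cd_sphere mu gam (Suc k) (?C l)"
    then have "?C r \<in> cd_sphere mu gam (Suc k) l"
      using cd_conj_in_sphere[OF cd_conj_carrier r] l(1) by (simp add: cd_conj_conj)
    then have "?C (cd_mult mu gam (Suc k) (?C r) a) = ?C (cd_mult mu gam (Suc k) l a)"
      using eq by simp
    then show "cd_mult mu gam (Suc k) (?C a) r = cd_mult mu gam (Suc k) (?C a) (?C l)"
      using a l(1) cd_sphere_carrier[OF r] by (simp add: cd_conj_mult cd_conj_conj)
  qed simp_all
  then show ?thesis using a by (metis cd_conj_conj cd_conj_zero)
qed

lemma cd_sphere_rigid_Suc0:
  assumes mu: "4 * mu + 1 \<noteq> 0"
  shows "cd_sphere_rigid mu gam (Suc 0)"
  unfolding cd_sphere_rigid_def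
proof (intro ballI impI)
  fix l a :: "'a cd"
  assume l: "l \<in> cd_carrier (Suc 0) - range cd_const" and a: "a \<in> cd_carrier (Suc 0)"
    and eq: "\<forall>r \<in> cd_sphere mu gam (Suc 0) l. cd_mult mu gam (Suc 0) a r = cd_mult mu gam (Suc 0) a l"
  have "l 1 \<noteq> 0"
  proof -
    obtain i where i: "i \<noteq> 0" "l i \<noteq> 0" using l by (auto simp: cd_in_range_const_iff)
    then have "i < 2" using l by (simp add: cd_carrier_def) (meson not_le)
    then show ?thesis using i by (metis One_nat_def less_2_cases)
  qed
  let ?d = "\<lambda>i. cd_conj (Suc 0) l i - l i"
  have "cd_conj (Suc 0) l \<in> cd_sphere mu gam (Suc 0) l"
    using l by (simp add: cd_sphere_def cd_tr_conj cd_norm_conj)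
  then have zero: "cd_mult mu gam (Suc 0) a ?d = (\<lambda>i. 0)"
    using eq by (simp add: cd_mult_diff_right)
  have "norm1 mu (?d 0) (?d 1) = - ((4 * mu + 1) * (l 1 * l 1))"
    by (simp add: norm1_def cd_conj.simps(2) algebra_simps)
  then have "norm1 mu (?d 0) (?d 1) \<noteq> 0" using mu \<open>l 1 \<noteq> 0\<close> by simp
  from cd_Suc0_mult_eq_zero(2)[OF _ this a zero] l show "a = (\<lambda>i. 0)" by simp
qed

lemma cd_sphere_rigid_step_lo:
  fixes c d a1 a2 :: "'a::field cd"
  assumes rigid: "cd_sphere_rigid mu gam (Suc k)"
    and cd: "c \<in> cd_carrier (Suc k)" "d \<in> cd_carrier (Suc k)" and c: "c \<notin> range cd_const"
    and a: "a1 \<in> cd_carrier (Suc k)" "a2 \<in> cd_carrier (Suc k)"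
    and eq: "\<And>r. r \<in> cd_sphere mu gam (Suc (Suc k)) (cd_join (Suc k) c d) \<Longrightarrow>
      cd_mult mu gam (Suc (Suc k)) (cd_join (Suc k) a1 a2) r =
      cd_mult mu gam (Suc (Suc k)) (cd_join (Suc k) a1 a2) (cd_join (Suc k) c d)"
  shows "a1 = (\<lambda>i. 0) \<and> a2 = (\<lambda>i. 0)"
proof
  let ?M = "cd_mult mu gam (Suc k)" and ?C = "cd_conj (Suc k)"
  have comp: "?M a1 x = ?M a1 c \<and> ?M a2 (?C x) = ?M a2 (?C c)" if x: "x \<in> cd_sphere mu gam (Suc k) c" for x
    using eq[OF cd_join_in_sphere_lo[OF x cd]] cd a cd_sphere_carrier[OF x]
    by (simp add: cd_mult_join cd_join_eq_iff) (simp add: fun_eq_iff)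
  show "a1 = (\<lambda>i. 0)"
    using comp by (blast intro: cd_sphere_rigidD[OF rigid cd(1) c a(1)])
  show "a2 = (\<lambda>i. 0)"
  proof (rule cd_sphere_rigidD[OF rigid _ _ a(2)])
    show "?C c \<notin> range cd_const" using c cd(1) by (simp add: cd_conj_in_range_const_iff)
    fix x assume x: "x \<in> cd_sphere mu gam (Suc k) (?C c)"
    then have "?C x \<in> cd_sphere mu gam (Suc k) c"
      using cd_conj_in_sphere[OF cd_conj_carrier x] cd(1) by (simp add: cd_conj_conj)
    then show "?M a2 x = ?M a2 (?C c)"
      using comp cd_conj_conj[OF cd_sphere_carrier[OF x]] by metis
  qed simp
qed

lemma cd_sphere_rigid_step_hi:
  fixes c d a1 a2 :: "'a::field cd"
  assumes rigid: "cd_sphere_rigid mu gam (Suc k)" and gam: "gam (Suc k) \<noteq> 0"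
    and cd: "c \<in> cd_carrier (Suc k)" "d \<in> cd_carrier (Suc k)" and d: "d \<notin> range cd_const"
    and a: "a1 \<in> cd_carrier (Suc k)" "a2 \<in> cd_carrier (Suc k)"
    and eq: "\<And>r. r \<in> cd_sphere mu gam (Suc (Suc k)) (cd_join (Suc k) c d) \<Longrightarrow>
      cd_mult mu gam (Suc (Suc k)) (cd_join (Suc k) a1 a2) r =
      cd_mult mu gam (Suc (Suc k)) (cd_join (Suc k) a1 a2) (cd_join (Suc k) c d)"
  shows "a1 = (\<lambda>i. 0) \<and> a2 = (\<lambda>i. 0)"
proof
  let ?M = "cd_mult mu gam (Suc k)" and ?C = "cd_conj (Suc k)"
  have comp: "?M y a1 = ?M d a1 \<and> ?M (?C y) a2 = ?M (?C d) a2" if y: "y \<in> cd_sphere mu gam (Suc k) d" for y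
    using eq[OF cd_join_in_sphere_hi[OF y cd]] cd a cd_sphere_carrier[OF y] gam
    by (simp add: cd_mult_join cd_join_eq_iff) (simp add: fun_eq_iff)
  show "a1 = (\<lambda>i. 0)"
    using comp by (blast intro: cd_sphere_rigidD_right[OF rigid cd(2) d a(1)])
  show "a2 = (\<lambda>i. 0)"
  proof (rule cd_sphere_rigidD_right[OF rigid _ _ a(2)])
    show "?C d \<notin> range cd_const" using d cd(2) by (simp add: cd_conj_in_range_const_iff)
    fix y assume y: "y \<in> cd_sphere mu gam (Suc k) (?C d)"
    then have "?C y \<in> cd_sphere mu gam (Suc k) d"
      using cd_conj_in_sphere[OF cd_conj_carrier y] cd(2) by (simp add: cd_conj_conj)
    then show "?M y a2 = ?M (?C d) a2"
      using comp cd_conj_conj[OF cd_sphere_carrier[OF y]] by metis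
  qed simp
qed

text \<open>Points \<open>(x, y\<^sub>1)\<close>, \<open>(x, y\<^sub>2)\<close> on the sphere of \<open>(s, \<delta>)\<close> whose second halves differ by an
  element of nonzero norm. Over a field with two elements and \<open>mu = 0\<close> the only element of norm 1
  in \<open>A\<^sub>1\<close> is 1, so \<open>x = s\<close> does not work there and the last case takes \<open>x = s + 1\<close>.\<close>

lemma norm1_sphere_witnesses:
  fixes mu s \<delta> \<gamma> :: "'a::field"
  assumes \<delta>: "\<delta> \<noteq> 0" and \<gamma>: "\<gamma> \<noteq> 0"
  obtains x0 x1 u1 v1 u2 v2 where "2 * x0 + x1 = 2 * s"
    "norm1 mu x0 x1 - \<gamma> * norm1 mu u1 v1 = s * s - \<gamma> * (\<delta> * \<delta>)"
    "norm1 mu x0 x1 - \<gamma> * norm1 mu u2 v2 = s * s - \<gamma> * (\<delta> * \<delta>)"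
    "norm1 mu (u1 - u2) (v1 - v2) \<noteq> 0"
proof (cases "mu = 0")
  case False
  have "norm1 mu (\<delta> - \<delta>) (0 - \<delta> / mu) = - (\<delta> * \<delta> / mu)"
    using False by (simp add: norm1_def field_simps)
  then show ?thesis
    using that[of s 0 \<delta> 0 \<delta> "\<delta> / mu"] False \<delta> by (simp add: norm1_def field_simps)
next
  case mu: True
  show ?thesis
  proof (cases "\<exists>\<alpha>::'a. \<alpha> \<noteq> 0 \<and> \<alpha> \<noteq> \<delta>")
    case True
    then obtain \<alpha> :: 'a where \<alpha>: "\<alpha> \<noteq> 0" "\<alpha> \<noteq> \<delta>" by blast
    have "norm1 mu (\<delta> - \<alpha>) (0 - (\<delta> * \<delta> / \<alpha> - \<alpha>)) = - (\<delta> * (\<delta> - \<alpha>) * (\<delta> - \<alpha>)) / \<alpha>"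
      using mu \<alpha> by (simp add: norm1_def field_simps)
    then have "norm1 mu (\<delta> - \<alpha>) (0 - (\<delta> * \<delta> / \<alpha> - \<alpha>)) \<noteq> 0" using \<alpha> \<delta> by simp
    moreover have "norm1 mu \<alpha> (\<delta> * \<delta> / \<alpha> - \<alpha>) = \<delta> * \<delta>"
      using mu \<alpha> by (simp add: norm1_def field_simps)
    ultimately show ?thesis
      using that[of s 0 \<delta> 0 \<alpha> "\<delta> * \<delta> / \<alpha> - \<alpha>"] mu by (simp add: norm1_def)
  next
    case False
    then have only: "\<alpha> = 0 \<or> \<alpha> = \<delta>" for \<alpha> :: 'a by blast
    have \<delta>1: "\<delta> = 1" using only[of 1] by simp
    have "(1::'a) + 1 \<noteq> 1" by (metis add.right_neutral add_left_cancel zero_neq_one)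
    then have two: "(2::'a) = 0" using only[of "1 + 1"] \<delta>1 by (simp add: one_add_one)
    have \<gamma>1: "\<gamma> = 1" using only[of \<gamma>] \<delta>1 \<gamma> by simp
    have "(s + 1) * (s + 1) - (s * s - 1) = 2 * (s + 1)" by (simp add: algebra_simps)
    then have "(s + 1) * (s + 1) = s * s - 1" using two by simp
    then show ?thesis
      using that[of "s + 1" 0 0 1 1 1] mu two \<gamma>1 \<delta>1 by (simp add: norm1_def algebra_simps)
  qed
qed

definition cd1 :: "'a::zero \<Rightarrow> 'a \<Rightarrow> 'a cd" where
  "cd1 u v = (\<lambda>i. if i = 0 then u else if i = 1 then v else 0)"

lemma cd1_carrier [simp]: "cd1 u v \<in> cd_carrier (Suc k)"
  by (rule cd_carrier_Suc0_le) (simp add: cd1_def cd_carrier_def)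

lemma cd1_apply [simp]: "cd1 u v 0 = u" "cd1 u v (Suc 0) = v"
  by (simp_all add: cd1_def)

lemma cd_const_eq_cd1: "cd_const s = cd1 s 0"
  by (simp add: cd1_def cd_const_def fun_eq_iff)

lemma cd1_diff: "(\<lambda>i. cd1 u v i - cd1 u' v' i) = cd1 (u - u') (v - (v'::'a::field))"
  by (simp add: cd1_def fun_eq_iff)

lemma cd_sphere_rigid_step_const:
  fixes a1 a2 :: "'a::field cd"
  assumes gam: "gam (Suc k) \<noteq> 0" and \<delta>: "\<delta> \<noteq> 0"
    and a: "a1 \<in> cd_carrier (Suc k)" "a2 \<in> cd_carrier (Suc k)"
    and eq: "\<And>r. r \<in> cd_sphere mu gam (Suc (Suc k)) (cd_join (Suc k) (cd_const s) (cd_const \<delta>)) \<Longrightarrow>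
      cd_mult mu gam (Suc (Suc k)) (cd_join (Suc k) a1 a2) r =
      cd_mult mu gam (Suc (Suc k)) (cd_join (Suc k) a1 a2) (cd_join (Suc k) (cd_const s) (cd_const \<delta>))"
  shows "a1 = (\<lambda>i. 0) \<and> a2 = (\<lambda>i. 0)"
proof -
  let ?M = "cd_mult mu gam (Suc k)" and ?C = "cd_conj (Suc k)" and ?\<gamma> = "gam (Suc k)"
  let ?l = "cd_join (Suc k) (cd_const s) (cd_const \<delta>)"
  obtain x0 x1 u1 v1 u2 v2 where x: "2 * x0 + x1 = 2 * s"
    and y: "norm1 mu x0 x1 - ?\<gamma> * norm1 mu u1 v1 = s * s - ?\<gamma> * (\<delta> * \<delta>)"
      "norm1 mu x0 x1 - ?\<gamma> * norm1 mu u2 v2 = s * s - ?\<gamma> * (\<delta> * \<delta>)"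
    and y12: "norm1 mu (u1 - u2) (v1 - v2) \<noteq> 0"
    using norm1_sphere_witnesses[OF \<delta> gam] by blast
  let ?x = "cd1 x0 x1" and ?y1 = "cd1 u1 v1" and ?y2 = "cd1 u2 v2"
  have in_sphere: "cd_join (Suc k) ?x (cd1 u v) \<in> cd_sphere mu gam (Suc (Suc k)) ?l"
    if "norm1 mu x0 x1 - ?\<gamma> * norm1 mu u v = s * s - ?\<gamma> * (\<delta> * \<delta>)" for u v
    using that x
    by (simp add: cd_sphere_def cd_tr_join cd_norm_join cd_tr_Suc0_emb cd_norm_Suc0_emb cd_const_eq_cd1
        norm1_def)
  have "cd_mult mu gam (Suc (Suc k)) (cd_join (Suc k) a1 a2) (cd_join (Suc k) ?x ?y1) =
      cd_mult mu gam (Suc (Suc k)) (cd_join (Suc k) a1 a2) (cd_join (Suc k) ?x ?y2)"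
    using eq[OF in_sphere[OF y(1)]] eq[OF in_sphere[OF y(2)]] by simp
  then have "?M ?y1 a1 = ?M ?y2 a1 \<and> ?M (?C ?y1) a2 = ?M (?C ?y2) a2"
    using a gam by (simp add: cd_mult_join cd_join_eq_iff) (simp add: fun_eq_iff)
  then have zero: "?M (cd1 (u1 - u2) (v1 - v2)) a1 = (\<lambda>i. 0)"
      "?M (cd_conj (Suc 0) (cd1 (u1 - u2) (v1 - v2))) a2 = (\<lambda>i. 0)"
    by (simp_all add: cd_mult_diff_left cd1_diff[symmetric] cd_conj_diff cd_conj_Suc0_emb[of _ k])
  let ?z = "cd_conj (Suc 0) (cd1 (u1 - u2) (v1 - v2))"
  have "norm1 mu (?z 0) (?z 1) \<noteq> 0"
    using y12 by (simp add: norm1_conj[simplified])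
  then show ?thesis
    using cd_Suc0_mult_eq_zero(1)[OF _ _ a(1) zero(1)] cd_Suc0_mult_eq_zero(1)[OF _ _ a(2) zero(2)] y12
    by simp
qed

lemma cd_sphere_rigid_join:
  fixes c d a1 a2 :: "'a::field cd"
  assumes rigid: "cd_sphere_rigid mu gam (Suc k)" and gam: "gam (Suc k) \<noteq> 0"
    and cd: "c \<in> cd_carrier (Suc k)" "d \<in> cd_carrier (Suc k)" and l: "cd_join (Suc k) c d \<notin> range cd_const"
    and a: "a1 \<in> cd_carrier (Suc k)" "a2 \<in> cd_carrier (Suc k)"
    and eq: "\<And>r. r \<in> cd_sphere mu gam (Suc (Suc k)) (cd_join (Suc k) c d) \<Longrightarrow>
      cd_mult mu gam (Suc (Suc k)) (cd_join (Suc k) a1 a2) r =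
      cd_mult mu gam (Suc (Suc k)) (cd_join (Suc k) a1 a2) (cd_join (Suc k) c d)"
  shows "a1 = (\<lambda>i. 0) \<and> a2 = (\<lambda>i. 0)"
proof (cases "c \<in> range cd_const")
  case False
  then show ?thesis by (intro cd_sphere_rigid_step_lo[OF rigid cd _ a] eq)
next
  case True
  then obtain s where s: "c = cd_const s" by blast
  show ?thesis
  proof (cases "d \<in> range cd_const")
    case False
    then show ?thesis by (intro cd_sphere_rigid_step_hi[OF rigid gam cd _ a] eq)
  next
    case True
    then obtain \<delta> where \<delta>: "d = cd_const \<delta>" by blast
    have "\<delta> \<noteq> 0"
    proof
      assume "\<delta> = 0"
      then have "cd_join (Suc k) c d = cd_const s" by (simp add: s \<delta> cd_const_zero cd_join_const)
      with l show False by blast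
    qed
    then show ?thesis
      using eq unfolding s \<delta> by (rule cd_sphere_rigid_step_const[where gam = gam, OF gam _ a])
  qed
qed

lemma cd_sphere_rigid_Suc:
  fixes mu :: "'a::field"
  assumes rigid: "cd_sphere_rigid mu gam (Suc k)" and gam: "gam (Suc k) \<noteq> 0"
  shows "cd_sphere_rigid mu gam (Suc (Suc k))"
  unfolding cd_sphere_rigid_def
proof (intro ballI impI)
  fix l a :: "'a cd"
  assume l: "l \<in> cd_carrier (Suc (Suc k)) - range cd_const" and a: "a \<in> cd_carrier (Suc (Suc k))"
    and eq: "\<forall>r \<in> cd_sphere mu gam (Suc (Suc k)) l.
      cd_mult mu gam (Suc (Suc k)) a r = cd_mult mu gam (Suc (Suc k)) a l"
  obtain c d where l_cd: "l = cd_join (Suc k) c d" and cd: "c \<in> cd_carrier (Suc k)" "d \<in> cd_carrier (Suc k)"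
    using l by (blast elim: cd_carrier_SucE)
  obtain a1 a2 where a_12: "a = cd_join (Suc k) a1 a2" and a12: "a1 \<in> cd_carrier (Suc k)" "a2 \<in> cd_carrier (Suc k)"
    using a by (rule cd_carrier_SucE)
  have "a1 = (\<lambda>i. 0) \<and> a2 = (\<lambda>i. 0)"
  proof (rule cd_sphere_rigid_join[OF rigid gam cd _ a12])
    show "cd_join (Suc k) c d \<notin> range cd_const" using l l_cd by simp
    show "cd_mult mu gam (Suc (Suc k)) (cd_join (Suc k) a1 a2) r =
        cd_mult mu gam (Suc (Suc k)) (cd_join (Suc k) a1 a2) (cd_join (Suc k) c d)"
      if "r \<in> cd_sphere mu gam (Suc (Suc k)) (cd_join (Suc k) c d)" for r
      using eq that by (simp add: l_cd a_12)
  qed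
  then show "a = (\<lambda>i. 0)" by (simp add: a_12 cd_join_zero_zero)
qed

lemma cd_sphere_rigid:
  fixes mu :: "'a::field"
  assumes mu: "4 * mu + 1 \<noteq> 0" and gam: "\<And>j. 1 \<le> j \<Longrightarrow> j \<le> k \<Longrightarrow> gam j \<noteq> 0"
  shows "cd_sphere_rigid mu gam (Suc k)"
  using gam
proof (induction k)
  case 0
  show ?case using mu by (rule cd_sphere_rigid_Suc0)
next
  case (Suc k)
  then show ?case by (simp add: cd_sphere_rigid_Suc)
qed

section \<open>Reduction modulo a monic quadratic\<close>

definition cd_poly_supp :: "(nat \<Rightarrow> 'a::zero cd) \<Rightarrow> nat set" where
  "cd_poly_supp f = {k. f k \<noteq> (\<lambda>i. 0)}"

definition cd_coord_poly :: "(nat \<Rightarrow> 'a::field cd) \<Rightarrow> nat \<Rightarrow> 'a poly" where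
  "cd_coord_poly f i = (\<Sum>k\<in>cd_poly_supp f. monom (f k i) k)"

text \<open>\<open>pow_rem t N m = (u, v)\<close> means \<open>x ^ m \<equiv> u + v x\<close> modulo \<open>x\<^sup>2 - t x + N\<close>.\<close>

fun pow_rem :: "'a::field \<Rightarrow> 'a \<Rightarrow> nat \<Rightarrow> 'a \<times> 'a" where
  "pow_rem t N 0 = (1, 0)"
| "pow_rem t N (Suc m) = (- N * snd (pow_rem t N m), fst (pow_rem t N m) + t * snd (pow_rem t N m))"

definition cd_rem_const :: "'a::field \<Rightarrow> 'a \<Rightarrow> (nat \<Rightarrow> 'a cd) \<Rightarrow> 'a cd" where
  "cd_rem_const t N f = (\<lambda>i. \<Sum>k\<in>cd_poly_supp f. fst (pow_rem t N k) * f k i)"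

definition cd_rem_lin :: "'a::field \<Rightarrow> 'a \<Rightarrow> (nat \<Rightarrow> 'a cd) \<Rightarrow> 'a cd" where
  "cd_rem_lin t N f = (\<lambda>i. \<Sum>k\<in>cd_poly_supp f. snd (pow_rem t N k) * f k i)"

lemma cd_rem_lin_carrier: "cd_is_poly n f \<Longrightarrow> cd_rem_lin t N f \<in> cd_carrier n"
  by (auto simp: cd_rem_lin_def cd_carrier_def cd_is_poly_def)

lemma monom_pow_rem_dvd: "[:N, -t, 1:] dvd (monom 1 m - [:fst (pow_rem t N m), snd (pow_rem t N m):])"
proof (induction m)
  case 0
  then show ?case by (simp add: monom_0)
next
  case (Suc m)
  let ?u = "fst (pow_rem t N m)" and ?v = "snd (pow_rem t N m)"
  have "monom 1 (Suc m) - [:fst (pow_rem t N (Suc m)), snd (pow_rem t N (Suc m)):] =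
      [:0, 1:] * (monom 1 m - [:?u, ?v:]) + smult ?v [:N, -t, 1:]"
    by (simp add: monom_Suc algebra_simps)
  then show ?case by (simp only: dvd_add dvd_mult Suc.IH dvd_smult dvd_refl)
qed

lemma finite_cd_poly_supp: "cd_is_poly n f \<Longrightarrow> finite (cd_poly_supp f)"
  by (simp add: cd_is_poly_def cd_poly_supp_def)

lemma coeff_cd_coord_poly: "cd_is_poly n f \<Longrightarrow> coeff (cd_coord_poly f i) m = f m i"
  by (simp add: cd_coord_poly_def coeff_sum finite_cd_poly_supp)
    (auto simp: cd_poly_supp_def)

lemma cd_coord_poly_rem_dvd:
  assumes f: "cd_is_poly n f"
  shows "[:N, -t, 1:] dvd cd_coord_poly f i - [:cd_rem_const t N f i, cd_rem_lin t N f i:]"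
proof -
  let ?S = "cd_poly_supp f" and ?r = "\<lambda>k. [:fst (pow_rem t N k), snd (pow_rem t N k):]"
  have "[:cd_rem_const t N f i, cd_rem_lin t N f i:] = (\<Sum>k\<in>?S. smult (f k i) (?r k))"
    by (rule poly_eqI)
      (simp add: cd_rem_const_def cd_rem_lin_def coeff_sum coeff_pCons mult.commute split: nat.split)
  then have "cd_coord_poly f i - [:cd_rem_const t N f i, cd_rem_lin t N f i:] =
      (\<Sum>k\<in>?S. smult (f k i) (monom 1 k - ?r k))"
    by (simp add: cd_coord_poly_def smult_monom smult_diff_right sum_subtractf)
  then show ?thesis by (simp only: dvd_sum dvd_smult monom_pow_rem_dvd)
qed

lemma quadratic_dvd_linear_iff: "[:N, -t, 1:] dvd [:a, b::'a::field:] \<longleftrightarrow> a = 0 \<and> b = 0"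
proof
  assume dvd: "[:N, -t, 1:] dvd [:a, b:]"
  show "a = 0 \<and> b = 0"
  proof (rule ccontr)
    assume "\<not> (a = 0 \<and> b = 0)"
    then have "degree [:N, -t, 1:] \<le> degree [:a, b:]" using dvd by (intro dvd_imp_degree_le) auto
    moreover have "degree [:a, b:] \<le> 1" by (rule order.trans[OF degree_pCons_le]) simp
    ultimately show False by simp
  qed
qed simp

lemma quadratic_dvd_cd_coord_poly_iff:
  assumes f: "cd_is_poly n f"
  shows "(\<forall>i. [:N, -t, 1:] dvd cd_coord_poly f i) \<longleftrightarrow>
    cd_rem_const t N f = (\<lambda>i. 0) \<and> cd_rem_lin t N f = (\<lambda>i. 0)"
proof -
  have "[:N, -t, 1:] dvd cd_coord_poly f i \<longleftrightarrow>
      [:N, -t, 1:] dvd [:cd_rem_const t N f i, cd_rem_lin t N f i:]" for i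
    using dvd_add_right_iff[OF cd_coord_poly_rem_dvd[OF f, of N t i],
        of "[:cd_rem_const t N f i, cd_rem_lin t N f i:]"] by simp
  then show ?thesis by (simp add: quadratic_dvd_linear_iff fun_eq_iff all_conj_distrib)
qed

lemma cd_mult_sum_left:
  "finite K \<Longrightarrow> cd_mult mu gam n (\<lambda>i. \<Sum>k\<in>K. c k * x k i) z =
    (\<lambda>i. \<Sum>k\<in>K. (c k::'a::field) * cd_mult mu gam n (x k) z i)"
proof (induction K rule: finite_induct)
  case (insert a K)
  then show ?case using cd_mult_lincomb[of mu gam n "c a" "x a" 1 "\<lambda>i. \<Sum>k\<in>K. c k * x k i" z] by simp
qed simp

lemma cd_pow_quadratic:
  fixes r :: "'a::field cd"
  assumes r: "r \<in> cd_carrier (Suc k)" and rr: "cd_mult mu gam (Suc k) r r = (\<lambda>i. t * r i - cd_const N i)"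
  shows "cd_pow mu gam (Suc k) r m = (\<lambda>i. fst (pow_rem t N m) * cd_const 1 i + snd (pow_rem t N m) * r i)"
proof (induction m)
  case (Suc m)
  have "cd_pow mu gam (Suc k) r (Suc m) =
      (\<lambda>i. fst (pow_rem t N m) * cd_mult mu gam (Suc k) r (cd_const 1) i +
        snd (pow_rem t N m) * cd_mult mu gam (Suc k) r r i)"
    by (simp add: Suc.IH cd_mult_lincomb)
  also have "\<dots> = (\<lambda>i. fst (pow_rem t N (Suc m)) * cd_const 1 i + snd (pow_rem t N (Suc m)) * r i)"
    using r by (simp add: rr cd_mult_const) (simp add: fun_eq_iff algebra_simps cd_const_def)
  finally show ?case .
qed simp

lemma cd_eval_quadratic:
  fixes r :: "'a::field cd"
  assumes f: "cd_is_poly (Suc k) f" and r: "r \<in> cd_carrier (Suc k)"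
    and rr: "cd_mult mu gam (Suc k) r r = (\<lambda>i. t * r i - cd_const N i)"
  shows "cd_eval mu gam (Suc k) f r =
    (\<lambda>i. cd_rem_const t N f i + cd_mult mu gam (Suc k) (cd_rem_lin t N f) r i)"
proof -
  have fk: "f m \<in> cd_carrier (Suc k)" for m using f by (simp add: cd_is_poly_def)
  have "cd_mult mu gam (Suc k) (f m) (cd_pow mu gam (Suc k) r m) =
      (\<lambda>i. fst (pow_rem t N m) * f m i + snd (pow_rem t N m) * cd_mult mu gam (Suc k) (f m) r i)" for m
    by (simp add: cd_pow_quadratic[OF r rr] cd_mult_lincomb cd_mult_const[OF fk])
  then show ?thesis
    by (simp add: cd_eval_def cd_poly_supp_def[symmetric] sum.distrib cd_rem_const_def cd_rem_lin_def
        cd_mult_sum_left finite_cd_poly_supp[OF f])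
qed

lemma cd_charpoly_eq_const:
  "cd_charpoly mu gam n l q = cd_const (coeff [:cd_norm mu gam n l, - cd_tr n l, 1:] q)"
  by (auto simp: cd_charpoly_def cd_const_def fun_eq_iff coeff_pCons numeral_2_eq_2 split: nat.split)

lemma cd_charpoly_root_iff:
  fixes l r :: "'a::field cd"
  assumes r: "r \<in> cd_carrier (Suc k)"
  shows "cd_eval mu gam (Suc k) (cd_charpoly mu gam (Suc k) l) r = (\<lambda>i. 0) \<longleftrightarrow>
    cd_mult mu gam (Suc k) r r = (\<lambda>i. cd_tr (Suc k) l * r i - cd_const (cd_norm mu gam (Suc k) l) i)"
proof -
  let ?p = "cd_charpoly mu gam (Suc k) l" and ?P = "[:cd_norm mu gam (Suc k) l, - cd_tr (Suc k) l, 1:]"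
  let ?summand = "\<lambda>m. cd_mult mu gam (Suc k) (?p m) (cd_pow mu gam (Suc k) r m)"
  have summand: "?summand m = (\<lambda>i. coeff ?P m * cd_pow mu gam (Suc k) r m i)" for m
  proof -
    have "cd_pow mu gam (Suc k) r m \<in> cd_carrier (Suc k)" by (cases m) simp_all
    then show ?thesis by (simp add: cd_charpoly_eq_const cd_mult_const)
  qed
  have "cd_eval mu gam (Suc k) ?p r = (\<lambda>i. \<Sum>m\<in>{0, 1, 2}. ?summand m i)"
    unfolding cd_eval_def
    by (rule ext, rule sum.mono_neutral_left) (auto simp: cd_charpoly_def)
  also have "\<dots> = (\<lambda>i. cd_const (cd_norm mu gam (Suc k) l) i - cd_tr (Suc k) l * r i +
      cd_mult mu gam (Suc k) r r i)"
    using r by (simp add: summand numeral_2_eq_2 cd_mult_const) (auto simp: cd_const_def fun_eq_iff algebra_simps)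
  finally show ?thesis
    by (auto simp: fun_eq_iff algebra_simps)
qed

lemma cd_pmult_charpoly_apply:
  assumes g: "\<And>j. g j \<in> cd_carrier (Suc k)"
  shows "cd_pmult mu gam (Suc k) g (cd_charpoly mu gam (Suc k) l) m i =
    (\<Sum>j\<le>m. g j i * coeff [:cd_norm mu gam (Suc k) l, - cd_tr (Suc k) (l::'a::field cd), 1:] (m - j))"
  unfolding cd_pmult_def cd_charpoly_eq_const using cd_mult_const[OF g] by (simp add: mult.commute)

lemma cd_coord_poly_pmult_charpoly:
  fixes mu :: "'a::field" and gam :: "nat \<Rightarrow> 'a" and f g :: "nat \<Rightarrow> 'a cd" and l :: "'a cd"
  assumes f: "cd_is_poly (Suc k) f" and g: "cd_is_poly (Suc k) g"
    and fg: "f = cd_pmult mu gam (Suc k) g (cd_charpoly mu gam (Suc k) l)"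
  shows "cd_coord_poly f i = cd_coord_poly g i * [:cd_norm mu gam (Suc k) l, - cd_tr (Suc k) l, 1:]"
    (is "_ = _ * ?P")
proof (rule poly_eqI)
  fix m
  have gk: "g j \<in> cd_carrier (Suc k)" for j using g by (simp add: cd_is_poly_def)
  have "coeff (cd_coord_poly f i) m = f m i" by (rule coeff_cd_coord_poly[OF f])
  also have "\<dots> = (\<Sum>j\<le>m. g j i * coeff ?P (m - j))"
    unfolding fg by (rule cd_pmult_charpoly_apply[OF gk])
  also have "\<dots> = coeff (cd_coord_poly g i * ?P) m"
    by (simp only: coeff_mult coeff_cd_coord_poly[OF g])
  finally show "coeff (cd_coord_poly f i) m = coeff (cd_coord_poly g i * ?P) m" .
qed

lemma cd_pmult_charpoly_of_dvd:
  fixes mu :: "'a::field" and gam :: "nat \<Rightarrow> 'a" and f :: "nat \<Rightarrow> 'a cd" and l :: "'a cd"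
  assumes f: "cd_is_poly (Suc k) f"
    and dvd: "\<And>i. [:cd_norm mu gam (Suc k) l, - cd_tr (Suc k) l, 1:] dvd cd_coord_poly f i"
  shows "\<exists>g. cd_is_poly (Suc k) g \<and> f = cd_pmult mu gam (Suc k) g (cd_charpoly mu gam (Suc k) l)"
proof -
  let ?P = "[:cd_norm mu gam (Suc k) l, - cd_tr (Suc k) l, 1:]"
  define g where "g j i = (if i < 2 ^ Suc k then coeff (cd_coord_poly f i div ?P) j else 0)" for j i
  have gk: "g j \<in> cd_carrier (Suc k)" for j by (simp add: g_def cd_carrier_def)
  have "{j. g j \<noteq> (\<lambda>i. 0)} \<subseteq> (\<Union>i<2 ^ Suc k. {..degree (cd_coord_poly f i div ?P)})"
    by (auto simp: g_def fun_eq_iff le_degree split: if_splits)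
  then have "cd_is_poly (Suc k) g"
    using gk by (auto simp: cd_is_poly_def intro: finite_subset)
  moreover have "f = cd_pmult mu gam (Suc k) g (cd_charpoly mu gam (Suc k) l)"
  proof (intro ext)
    fix m i
    show "f m i = cd_pmult mu gam (Suc k) g (cd_charpoly mu gam (Suc k) l) m i"
    proof (cases "i < 2 ^ Suc k")
      case True
      have "cd_coord_poly f i div ?P * ?P = cd_coord_poly f i"
        using dvd[of i] by (rule dvd_div_mult_self)
      then have "f m i = coeff (cd_coord_poly f i div ?P * ?P) m"
        by (simp only: coeff_cd_coord_poly[OF f])
      also have "\<dots> = (\<Sum>j\<le>m. coeff (cd_coord_poly f i div ?P) j * coeff ?P (m - j))"
        by (rule coeff_mult)
      also have "\<dots> = cd_pmult mu gam (Suc k) g (cd_charpoly mu gam (Suc k) l) m i"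
        using True by (simp add: cd_pmult_charpoly_apply[OF gk] g_def)
      finally show ?thesis .
    next
      case False
      then show ?thesis
        using f by (simp add: cd_pmult_charpoly_apply[OF gk] g_def cd_is_poly_def cd_carrier_def)
    qed
  qed
  ultimately show ?thesis by blast
qed

lemma cd_pmult_charpoly_iff_dvd:
  fixes mu :: "'a::field" and gam :: "nat \<Rightarrow> 'a" and f :: "nat \<Rightarrow> 'a cd" and l :: "'a cd"
  assumes f: "cd_is_poly (Suc k) f"
  shows "(\<exists>g. cd_is_poly (Suc k) g \<and> f = cd_pmult mu gam (Suc k) g (cd_charpoly mu gam (Suc k) l)) \<longleftrightarrow>
    (\<forall>i. [:cd_norm mu gam (Suc k) l, - cd_tr (Suc k) l, 1:] dvd cd_coord_poly f i)"
proof
  assume "\<exists>g. cd_is_poly (Suc k) g \<and> f = cd_pmult mu gam (Suc k) g (cd_charpoly mu gam (Suc k) l)"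
  then show "\<forall>i. [:cd_norm mu gam (Suc k) l, - cd_tr (Suc k) l, 1:] dvd cd_coord_poly f i"
    using cd_coord_poly_pmult_charpoly[OF f] by (metis dvd_triv_right)
qed (use cd_pmult_charpoly_of_dvd[OF f] in blast)

section \<open>Spherical roots\<close>

lemma cd_spherical_root_iff_rem_zero:
  fixes mu :: "'a::field" and gam :: "nat \<Rightarrow> 'a" and f :: "nat \<Rightarrow> 'a cd" and l :: "'a cd"
  assumes mu: "4 * mu + 1 \<noteq> 0" and gam: "\<And>j. 1 \<le> j \<Longrightarrow> j \<le> k \<Longrightarrow> gam j \<noteq> 0"
    and f: "cd_is_poly (Suc k) f" and l: "l \<in> cd_carrier (Suc k)" "l \<notin> range cd_const"
  defines "t \<equiv> cd_tr (Suc k) l" and "N \<equiv> cd_norm mu gam (Suc k) l"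
  shows "cd_spherical_root mu gam (Suc k) f l \<longleftrightarrow>
    cd_rem_const t N f = (\<lambda>i. 0) \<and> cd_rem_lin t N f = (\<lambda>i. 0)"
    (is "_ \<longleftrightarrow> ?U = _ \<and> ?V = _")
proof -
  let ?M = "cd_mult mu gam (Suc k)"
  have on_sphere: "?M r r = (\<lambda>i. t * r i - cd_const N i)" if "r \<in> cd_sphere mu gam (Suc k) l" for r
    using that cd_mult_self[of r k mu gam] by (simp add: cd_sphere_def t_def N_def)
  have l_sphere: "l \<in> cd_sphere mu gam (Suc k) l" using l by (simp add: cd_sphere_def)
  show ?thesis
  proof
    assume root: "cd_spherical_root mu gam (Suc k) f l"
    have vanish: "(\<lambda>i. ?U i + ?M ?V r i) = (\<lambda>i. 0)" if r: "r \<in> cd_sphere mu gam (Suc k) l" for r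
    proof -
      have "cd_eval mu gam (Suc k) f r = (\<lambda>i. 0)"
        using root cd_sphere_carrier[OF r] cd_charpoly_root_iff[OF cd_sphere_carrier[OF r]]
          on_sphere[OF r]
        by (simp add: cd_spherical_root_def t_def N_def)
      then show ?thesis by (simp add: cd_eval_quadratic[OF f cd_sphere_carrier[OF r] on_sphere[OF r]])
    qed
    have "?V = (\<lambda>i. 0)"
    proof (rule cd_sphere_rigidD[OF cd_sphere_rigid[OF mu gam] l cd_rem_lin_carrier[OF f]])
      fix r assume "r \<in> cd_sphere mu gam (Suc k) l"
      from vanish[OF this] vanish[OF l_sphere] show "?M ?V r = ?M ?V l"
        by (simp add: fun_eq_iff) (metis add_left_cancel)
    qed
    moreover from this vanish[OF l_sphere] have "?U = (\<lambda>i. 0)" by simp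
    ultimately show "?U = (\<lambda>i. 0) \<and> ?V = (\<lambda>i. 0)" by blast
  next
    assume "?U = (\<lambda>i. 0) \<and> ?V = (\<lambda>i. 0)"
    then have "cd_eval mu gam (Suc k) f r = (\<lambda>i. 0)"
      if "r \<in> cd_carrier (Suc k)" "?M r r = (\<lambda>i. t * r i - cd_const N i)" for r
      using cd_eval_quadratic[OF f that] by simp
    then show "cd_spherical_root mu gam (Suc k) f l"
      using l on_sphere[OF l_sphere]
      by (auto simp: cd_spherical_root_def t_def N_def cd_charpoly_root_iff)
  qed
qed

theorem theorem3p12:
  fixes mu :: "'a::field" and gam :: "nat \<Rightarrow> 'a" and n :: nat
    and f :: "nat \<Rightarrow> 'a cd" and l :: "'a cd"
  assumes "1 \<le> n"
    and "4 * mu + 1 \<noteq> 0"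
    and "\<forall>k. 1 \<le> k \<and> k < n \<longrightarrow> gam k \<noteq> 0"
    and "cd_is_poly n f"
    and "l \<in> cd_carrier n" and "l \<notin> range cd_const"
  shows "cd_spherical_root mu gam n f l \<longleftrightarrow>
         (\<exists>g. cd_is_poly n g \<and> f = cd_pmult mu gam n g (cd_charpoly mu gam n l))"
proof -
  obtain k where n: "n = Suc k" using assms(1) by (cases n) auto
  have gam: "\<And>j. 1 \<le> j \<Longrightarrow> j \<le> k \<Longrightarrow> gam j \<noteq> 0" using assms(3) n by auto
  have f: "cd_is_poly (Suc k) f" using assms(4) n by simp
  let ?t = "cd_tr (Suc k) l" and ?N = "cd_norm mu gam (Suc k) l"
  have "cd_spherical_root mu gam (Suc k) f l \<longleftrightarrow>
      cd_rem_const ?t ?N f = (\<lambda>i. 0) \<and> cd_rem_lin ?t ?N f = (\<lambda>i. 0)"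
    using cd_spherical_root_iff_rem_zero[OF assms(2) gam f] assms(5,6) n by simp
  also have "\<dots> \<longleftrightarrow> (\<forall>i. [:?N, - ?t, 1:] dvd cd_coord_poly f i)"
    by (rule quadratic_dvd_cd_coord_poly_iff[OF f, symmetric])
  also have "\<dots> \<longleftrightarrow>
      (\<exists>g. cd_is_poly (Suc k) g \<and> f = cd_pmult mu gam (Suc k) g (cd_charpoly mu gam (Suc k) l))"
    by (rule cd_pmult_charpoly_iff_dvd[OF f, symmetric])
  finally show ?thesis unfolding n .
qed

end
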